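(* Let $G=(V,E)$ be a simple, connected graph. Then there exists a partition $V = A \cup B \cup C$ into pairwise disjoint sets ($C$ possibly empty) such that: (1) every $v \in A$ satisfies $d_B(v) \geq d_A(v) + \max\{1, d_C(v)\}$; (2) every $v \in B$ satisfies $d_A(v) \geq d_B(v) + \max\{1, d_C(v)\}$; (3) no two vertices of $C$ are joined by an edge, i.e. $d_C(v) = 0$ for all $v \in C$; (4) every $v \in C$ satisfies $d_A(v) = d_B(v)$; (5) $\# E(A \cup B, C) + 2\# E(A,A) + 2\# E(B,B) \leq 2\# E(A,B)$.
   Context: For a vertex $v$ and a set $S \subseteq V$, $d_S(v)$ denotes the number of neighbors of $v$ lying in $S$. For disjoint $X, Y \subseteq V$, $\# E(X,Y)$ is the number of edges with one endpoint in $X$ and the other in $Y$; $\# E(X,X)$ is the number of edges with both endpoints in $X$. *)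

theory Defs
  imports Main
begin

definition simple_graph :: "'a set \<Rightarrow> ('a \<Rightarrow> 'a \<Rightarrow> bool) \<Rightarrow> bool" where
  "simple_graph V E \<longleftrightarrow> finite V
     \<and> (\<forall>x y. E x y \<longrightarrow> x \<in> V \<and> y \<in> V)
     \<and> (\<forall>x y. E x y \<longrightarrow> E y x)
     \<and> (\<forall>x. \<not> E x x)"

definition connected_graph :: "'a set \<Rightarrow> ('a \<Rightarrow> 'a \<Rightarrow> bool) \<Rightarrow> bool" where
  "connected_graph V E \<longleftrightarrow> V \<noteq> {} \<and> (\<forall>x\<in>V. \<forall>y\<in>V. E\<^sup>*\<^sup>* x y)"

definition deg_in :: "('a \<Rightarrow> 'a \<Rightarrow> bool) \<Rightarrow> 'a set \<Rightarrow> 'a \<Rightarrow> nat" where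
  "deg_in E S v = card {u \<in> S. E v u}"

text \<open>Number of edges (unordered pairs) with one endpoint in X and the other in Y.
For disjoint X, Y this is #E(X,Y); for X = Y it is #E(X,X).\<close>
definition num_edges :: "('a \<Rightarrow> 'a \<Rightarrow> bool) \<Rightarrow> 'a set \<Rightarrow> 'a set \<Rightarrow> nat" where
  "num_edges E X Y = card {{x, y} | x y. x \<in> X \<and> y \<in> Y \<and> E x y}"

end

theory Submission
  imports Defs "HOL-Library.FuncSet"
begin

text \<open>Label the vertices by \<open>x : V \<rightarrow> {-1, 0, 1}\<close> so that the quadratic form
  \<open>x\<^sup>T M x\<close> of the adjacency matrix \<open>M\<close> is minimal and, among all minimisers, \<open>x\<close> has
  as many zeros as possible, and take \<open>A\<close>, \<open>B\<close>, \<open>C\<close> to be the level sets of \<open>1\<close>, \<open>-1\<close>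
  and \<open>0\<close>. Each of (1)--(4) says that some local relabelling cannot improve \<open>x\<close> in this order:
  relabelling a single vertex, relabelling the ends of an edge inside \<open>C\<close> by \<open>1\<close> and \<open>-1\<close>,
  or moving a vertex of \<open>A \<union> B\<close> into \<open>C\<close> while its neighbours in \<open>C\<close> take its old label.
  Condition (5) is the sum of (1) over \<open>A\<close> and of (2) over \<open>B\<close>.\<close>

lemma simple_graph_symp: "simple_graph V E \<Longrightarrow> symp E"
  unfolding simple_graph_def by (auto intro: sympI)

lemma simple_graph_irreflp: "simple_graph V E \<Longrightarrow> irreflp E"
  unfolding simple_graph_def by (auto intro: irreflpI)

lemma num_edges_eq_sum_deg_in:
  assumes "finite X" "finite Y" "X \<inter> Y = {}"
  shows "num_edges E X Y = (\<Sum>x\<in>X. deg_in E Y x)"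
proof -
  let ?P = "SIGMA x:X. {y\<in>Y. E x y}"
  have inj: "inj_on (\<lambda>(x, y). {x, y}) ?P"
    using assms(3) by (auto simp: inj_on_def doubleton_eq_iff)
  have "{{x, y} | x y. x \<in> X \<and> y \<in> Y \<and> E x y} = (\<lambda>(x, y). {x, y}) ` ?P"
    by auto
  then have "num_edges E X Y = card ?P"
    unfolding num_edges_def using card_image[OF inj] by simp
  also have "\<dots> = (\<Sum>x\<in>X. deg_in E Y x)"
    using assms by (simp add: deg_in_def)
  finally show ?thesis .
qed

lemma two_num_edges_eq_sum_deg_in:
  assumes "finite X" "symp E" "irreflp E"
  shows "2 * num_edges E X X = (\<Sum>x\<in>X. deg_in E X x)"
proof -
  let ?P = "SIGMA x:X. {y\<in>X. E x y}"
  let ?f = "\<lambda>(x, y). {x, y}"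
  have edges: "{{x, y} | x y. x \<in> X \<and> y \<in> X \<and> E x y} = ?f ` ?P"
    by auto
  have fibre: "card {p\<in>?P. ?f p = e} = 2" if e: "e \<in> ?f ` ?P" for e
  proof -
    obtain a b where ab: "a \<in> X" "b \<in> X" "E a b" "e = {a, b}"
      using e by fastforce
    then have "a \<noteq> b" using assms(3) by (auto dest: irreflpD)
    moreover have "{p\<in>?P. ?f p = e} = {(a, b), (b, a)}"
      using ab assms(2) by (auto simp: doubleton_eq_iff dest: sympD)
    ultimately show ?thesis by simp
  qed
  have "card ?P = (\<Sum>e\<in>?f ` ?P. card {p\<in>?P. ?f p = e})"
    unfolding card_eq_sum using assms(1) by (intro sum.image_gen) auto
  also have "\<dots> = 2 * num_edges E X X"
    unfolding num_edges_def edges by (simp add: fibre)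
  finally show ?thesis
    using assms(1) by (simp add: deg_in_def)
qed

lemma num_edges_commute: "symp E \<Longrightarrow> num_edges E X Y = num_edges E Y X"
  unfolding num_edges_def by (rule arg_cong[where f = card]) (auto dest: sympD)

lemma num_edges_inequality_from_degrees:
  assumes "symp E" "irreflp E" "finite A" "finite B" "finite C"
    and "A \<inter> B = {}" "A \<inter> C = {}" "B \<inter> C = {}"
    and A: "\<And>v. v \<in> A \<Longrightarrow> deg_in E A v + deg_in E C v \<le> deg_in E B v"
    and B: "\<And>v. v \<in> B \<Longrightarrow> deg_in E B v + deg_in E C v \<le> deg_in E A v"
  shows "num_edges E (A \<union> B) C + 2 * num_edges E A A + 2 * num_edges E B B
    \<le> 2 * num_edges E A B"
proof -
  have "num_edges E (A \<union> B) C = (\<Sum>v\<in>A \<union> B. deg_in E C v)"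
    using assms by (intro num_edges_eq_sum_deg_in) auto
  then have "num_edges E (A \<union> B) C + 2 * num_edges E A A + 2 * num_edges E B B
      = (\<Sum>v\<in>A. deg_in E A v + deg_in E C v) + (\<Sum>v\<in>B. deg_in E B v + deg_in E C v)"
    using assms(1-8)
    by (simp add: two_num_edges_eq_sum_deg_in sum.union_disjoint sum.distrib)
  also have "\<dots> \<le> (\<Sum>v\<in>A. deg_in E B v) + (\<Sum>v\<in>B. deg_in E A v)"
    using A B by (intro add_mono sum_mono) auto
  also have "\<dots> = 2 * num_edges E A B"
    using assms num_edges_commute[of E A B] by (simp add: num_edges_eq_sum_deg_in Int_commute)
  finally show ?thesis .
qed

definition nbr_sum :: "('a \<Rightarrow> 'a \<Rightarrow> bool) \<Rightarrow> 'a set \<Rightarrow> ('a \<Rightarrow> int) \<Rightarrow> 'a \<Rightarrow> int" where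
  "nbr_sum E V x u = (\<Sum>w\<in>V. if E u w then x w else 0)"

definition adj_form :: "('a \<Rightarrow> 'a \<Rightarrow> bool) \<Rightarrow> 'a set \<Rightarrow> ('a \<Rightarrow> int) \<Rightarrow> int" where
  "adj_form E V x = (\<Sum>u\<in>V. x u * nbr_sum E V x u)"

lemma nbr_sum_add: "nbr_sum E V (\<lambda>u. x u + d u) u = nbr_sum E V x u + nbr_sum E V d u"
  unfolding nbr_sum_def sum.distrib[symmetric] by (rule sum.cong) auto

lemma sum_mult_nbr_sum_commute:
  assumes "symp E"
  shows "(\<Sum>u\<in>V. x u * nbr_sum E V y u) = (\<Sum>u\<in>V. y u * nbr_sum E V x u)"
proof -
  have "(\<Sum>u\<in>V. x u * nbr_sum E V y u) = (\<Sum>u\<in>V. \<Sum>w\<in>V. if E u w then x u * y w else 0)"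
    unfolding nbr_sum_def sum_distrib_left by (intro sum.cong) auto
  also have "\<dots> = (\<Sum>w\<in>V. \<Sum>u\<in>V. if E u w then x u * y w else 0)"
    by (rule sum.swap)
  also have "\<dots> = (\<Sum>u\<in>V. y u * nbr_sum E V x u)"
    unfolding nbr_sum_def sum_distrib_left using assms
    by (intro sum.cong) (auto simp: mult.commute dest: sympD)
  finally show ?thesis .
qed

lemma adj_form_add:
  assumes "symp E"
  shows "adj_form E V (\<lambda>u. x u + d u)
    = adj_form E V x + 2 * (\<Sum>u\<in>V. d u * nbr_sum E V x u) + adj_form E V d"
  using sum_mult_nbr_sum_commute[OF assms, where V = V and x = x and y = d]
  unfolding adj_form_def nbr_sum_add by (simp add: algebra_simps sum.distrib)

lemma sum_star:
  fixes f :: "'a \<Rightarrow> 'b::comm_semiring_0"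
  assumes "finite V" "v \<in> V" "N \<subseteq> V" "v \<notin> N"
  shows "(\<Sum>u\<in>V. (if u = v then a else if u \<in> N then b else 0) * f u)
    = a * f v + b * sum f N"
proof -
  have "(\<Sum>u\<in>V. (if u = v then a else if u \<in> N then b else 0) * f u)
      = (\<Sum>u\<in>insert v N. (if u = v then a else if u \<in> N then b else 0) * f u)"
    using assms by (intro sum.mono_neutral_right) auto
  also have "\<dots> = a * f v + (\<Sum>u\<in>N. b * f u)"
    using assms by (simp add: finite_subset) (intro arg_cong2[where f = "(+)"] sum.cong; auto)
  also have "\<dots> = a * f v + b * sum f N"
    by (simp add: sum_distrib_left)
  finally show ?thesis .
qed

lemma adj_form_star:
  assumes "symp E" "irreflp E" "finite V" "v \<in> V" "N \<subseteq> V"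
    and nbrs: "\<And>u. u \<in> N \<Longrightarrow> E v u"
    and indep: "\<And>u w. u \<in> N \<Longrightarrow> w \<in> N \<Longrightarrow> \<not> E u w"
  shows "adj_form E V (\<lambda>u. if u = v then a else if u \<in> N then b else 0) = 2 * a * b * int (card N)"
proof -
  define d where "d u = (if u = v then a else if u \<in> N then b else 0)" for u
  have "v \<notin> N"
    using nbrs assms(2) by (auto dest: irreflpD)
  have centre: "nbr_sum E V d v = b * int (card N)"
  proof -
    have "nbr_sum E V d v = (\<Sum>w\<in>V. of_bool (w \<in> N) * b)"
      unfolding nbr_sum_def d_def using nbrs assms(2) by (intro sum.cong) (auto dest: irreflpD)
    also have "\<dots> = b * int (card N)"
      using assms(3,5) by (simp add: Int_absorb1 Int_def[symmetric])
    finally show ?thesis .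
  qed
  have leaf: "nbr_sum E V d u = a" if "u \<in> N" for u
  proof -
    have "nbr_sum E V d u = (\<Sum>w\<in>V. if w = v then a else 0)"
      unfolding nbr_sum_def d_def using that nbrs indep assms(1)
      by (intro sum.cong) (auto dest: sympD)
    then show ?thesis
      using assms(3,4) by simp
  qed
  have "adj_form E V d = a * nbr_sum E V d v + b * (\<Sum>u\<in>N. nbr_sum E V d u)"
    unfolding adj_form_def d_def using sum_star[OF assms(3-5) \<open>v \<notin> N\<close>] by simp
  also have "\<dots> = 2 * a * b * int (card N)"
    using centre leaf by simp
  finally show ?thesis
    unfolding d_def .
qed

lemma adj_form_update:
  assumes "symp E" "irreflp E" "finite V" "v \<in> V"
  shows "adj_form E V (x(v := t)) = adj_form E V x + 2 * (t - x v) * nbr_sum E V x v"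
proof -
  let ?d = "\<lambda>u. if u = v then t - x v else 0"
  have "x(v := t) = (\<lambda>u. x u + ?d u)"
    by auto
  then show ?thesis
    using adj_form_add[OF assms(1), where V = V and x = x and d = ?d]
      adj_form_star[OF assms, of "{}"] sum_star[OF assms(3,4), of "{}" "t - x v" 0 "nbr_sum E V x"]
    by (simp cong: if_cong)
qed

locale optimal_labelling =
  fixes V :: "'a set" and E :: "'a \<Rightarrow> 'a \<Rightarrow> bool" and x :: "'a \<Rightarrow> int"
  assumes graph: "simple_graph V E"
    and labelling: "x \<in> V \<rightarrow>\<^sub>E {-1, 0, 1}"
    and form_minimal: "y \<in> V \<rightarrow>\<^sub>E {-1, 0, 1} \<Longrightarrow> adj_form E V x \<le> adj_form E V y"
    and zeros_maximal: "y \<in> V \<rightarrow>\<^sub>E {-1, 0, 1} \<Longrightarrow> adj_form E V y = adj_form E V x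
      \<Longrightarrow> card {v\<in>V. y v = 0} \<le> card {v\<in>V. x v = 0}"

lemma optimal_labelling_exists:
  assumes "simple_graph V E"
  obtains x where "optimal_labelling V E x"
proof -
  let ?L = "V \<rightarrow>\<^sub>E {-1, 0, 1::int}"
  have "finite V"
    using assms by (simp add: simple_graph_def)
  then have "finite ?L" "?L \<noteq> {}"
    by (simp_all add: finite_PiE PiE_eq_empty_iff)
  then obtain x0 where x0: "x0 \<in> ?L" "\<And>y. y \<in> ?L \<Longrightarrow> adj_form E V x0 \<le> adj_form E V y"
    using arg_min_if_finite(1) arg_min_least by metis
  let ?M = "\<lambda>y. y \<in> ?L \<and> adj_form E V y = adj_form E V x0"
  let ?Z = "\<lambda>y. card {v\<in>V. y v = 0}"
  have "?Z y < Suc (card V)" for y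
    using \<open>finite V\<close> by (simp add: le_imp_less_Suc card_mono)
  then obtain x where x: "?M x" "\<And>y. ?M y \<Longrightarrow> ?Z y \<le> ?Z x"
    using Lattices_Big.ex_has_greatest_nat[of ?M x0 ?Z "Suc (card V)"] x0(1) by blast
  have "optimal_labelling V E x"
    by unfold_locales (use assms x0 x in auto)
  then show thesis
    using that by blast
qed

context optimal_labelling
begin

lemma finite_V: "finite V"
  using graph by (simp add: simple_graph_def)

lemma symp_E: "symp E"
  using simple_graph_symp[OF graph] .

lemma irreflp_E: "irreflp E"
  using simple_graph_irreflp[OF graph] .

lemma star_relabelling_nonneg:
  assumes "v \<in> V" "N \<subseteq> V"
    and "\<And>u. u \<in> N \<Longrightarrow> E v u" "\<And>u w. u \<in> N \<Longrightarrow> w \<in> N \<Longrightarrow> \<not> E u w"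
    and "x v + a \<in> {-1, 0, 1}" "\<And>u. u \<in> N \<Longrightarrow> x u + b \<in> {-1, 0, 1}"
  shows "0 \<le> a * nbr_sum E V x v + b * (\<Sum>u\<in>N. nbr_sum E V x u) + a * b * int (card N)"
proof -
  define d where "d u = (if u = v then a else if u \<in> N then b else 0)" for u
  have "v \<notin> N"
    using assms(3) irreflp_E by (auto dest: irreflpD)
  have "(\<lambda>u. x u + d u) \<in> V \<rightarrow>\<^sub>E {-1, 0, 1}"
    using labelling assms unfolding d_def by (auto simp: PiE_iff extensional_def)
  from form_minimal[OF this] show ?thesis
    using adj_form_add[OF symp_E, of V x d]
      adj_form_star[OF symp_E irreflp_E finite_V assms(1-4), of a b]
      sum_star[OF finite_V assms(1,2) \<open>v \<notin> N\<close>, of a b "nbr_sum E V x"]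
    unfolding d_def by linarith
qed

lemma zero_level_balanced:
  assumes "v \<in> V" "x v = 0"
  shows "nbr_sum E V x v = 0"
  using star_relabelling_nonneg[OF assms(1), of "{}" 1 0] star_relabelling_nonneg[OF assms(1), of "{}" "-1" 0] assms(2)
  by simp

lemma zero_level_independent:
  assumes "u \<in> V" "w \<in> V" "x u = 0" "x w = 0"
  shows "\<not> E u w"
proof
  assume "E u w"
  then have "0 \<le> nbr_sum E V x u - nbr_sum E V x w - 1"
    using star_relabelling_nonneg[OF assms(1), of "{w}" 1 "-1"] assms irreflp_E
    by (auto dest: irreflpD)
  then show False
    using zero_level_balanced assms by simp
qed

lemma nonzero_level_unbalanced:
  assumes "v \<in> V" "x v \<noteq> 0"
  shows "x v * nbr_sum E V x v < 0"
proof -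
  have update: "adj_form E V (x(v := 0)) = adj_form E V x - 2 * x v * nbr_sum E V x v"
    using adj_form_update[OF symp_E irreflp_E finite_V assms(1)] by simp
  have in_L: "x(v := 0) \<in> V \<rightarrow>\<^sub>E {-1, 0, 1}"
    using labelling assms(1) by (auto simp: PiE_iff extensional_def)
  have "x v * nbr_sum E V x v \<le> 0"
    using form_minimal[OF in_L] update by simp
  moreover have "x v * nbr_sum E V x v \<noteq> 0"
  proof
    assume "x v * nbr_sum E V x v = 0"
    then have "card {u\<in>V. (x(v := 0)) u = 0} \<le> card {u\<in>V. x u = 0}"
      using zeros_maximal[OF in_L] update by simp
    moreover have "{u\<in>V. (x(v := 0)) u = 0} = insert v {u\<in>V. x u = 0}"
      using assms by auto
    ultimately show False
      using assms finite_V by simp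
  qed
  ultimately show ?thesis
    by linarith
qed

lemma deg_in_zero_level_le:
  assumes "v \<in> V" "x v \<noteq> 0"
  shows "int (deg_in E (V \<inter> x -` {0}) v) \<le> - x v * nbr_sum E V x v"
proof -
  define N where "N = {u \<in> V \<inter> x -` {0}. E v u}"
  have N: "N \<subseteq> V" "\<And>u. u \<in> N \<Longrightarrow> E v u" "\<And>u w. u \<in> N \<Longrightarrow> w \<in> N \<Longrightarrow> \<not> E u w"
    unfolding N_def using zero_level_independent by auto
  have "x v \<in> {-1, 1}"
    using labelling assms by auto
  then have "0 \<le> - x v * nbr_sum E V x v + x v * (\<Sum>u\<in>N. nbr_sum E V x u) + - x v * x v * int (card N)"
    by (intro star_relabelling_nonneg[OF assms(1) N]) (auto simp: N_def)
  moreover have "x v * x v = 1"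
    using \<open>x v \<in> {-1, 1}\<close> by auto
  moreover have "(\<Sum>u\<in>N. nbr_sum E V x u) = 0"
    unfolding N_def using zero_level_balanced by simp
  ultimately show ?thesis
    unfolding deg_in_def N_def by simp
qed

lemma nbr_sum_eq_deg_in:
  "nbr_sum E V x v = int (deg_in E (V \<inter> x -` {1}) v) - int (deg_in E (V \<inter> x -` {-1}) v)"
proof -
  have "nbr_sum E V x v = (\<Sum>w\<in>V. of_bool (E v w \<and> x w = 1) - of_bool (E v w \<and> x w = -1))"
    unfolding nbr_sum_def using labelling by (intro sum.cong) auto
  also have "\<dots> = int (card (V \<inter> {w. E v w \<and> x w = 1})) - int (card (V \<inter> {w. E v w \<and> x w = -1}))"
    using finite_V by (simp add: sum_subtractf)
  also have "V \<inter> {w. E v w \<and> x w = 1} = {u \<in> V \<inter> x -` {1}. E v u}"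
    by auto
  also have "V \<inter> {w. E v w \<and> x w = -1} = {u \<in> V \<inter> x -` {-1}. E v u}"
    by auto
  finally show ?thesis
    unfolding deg_in_def .
qed

lemma deg_in_nonzero_level:
  assumes "v \<in> V" "x v \<noteq> 0"
  shows "deg_in E (V \<inter> x -` {x v}) v + max 1 (deg_in E (V \<inter> x -` {0}) v)
    \<le> deg_in E (V \<inter> x -` {- x v}) v"
proof -
  have "x v = 1 \<or> x v = -1"
    using labelling assms by auto
  then show ?thesis
    using nonzero_level_unbalanced[OF assms] deg_in_zero_level_le[OF assms]
      nbr_sum_eq_deg_in[of v] by (elim disjE) simp_all
qed

lemma deg_in_zero_level:
  assumes "v \<in> V" "x v = 0"
  shows "deg_in E (V \<inter> x -` {0}) v = 0"
    and "deg_in E (V \<inter> x -` {1}) v = deg_in E (V \<inter> x -` {-1}) v"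
proof -
  have "{u \<in> V \<inter> x -` {0}. E v u} = {}"
    using zero_level_independent assms by auto
  then show "deg_in E (V \<inter> x -` {0}) v = 0"
    unfolding deg_in_def by (metis card.empty)
  show "deg_in E (V \<inter> x -` {1}) v = deg_in E (V \<inter> x -` {-1}) v"
    using zero_level_balanced[OF assms] nbr_sum_eq_deg_in[of v] by simp
qed

end

theorem theorem1:
  fixes V :: "'a set" and E :: "'a \<Rightarrow> 'a \<Rightarrow> bool"
  assumes "simple_graph V E" and "connected_graph V E"
  shows "\<exists>A B C. A \<union> B \<union> C = V \<and> A \<inter> B = {} \<and> A \<inter> C = {} \<and> B \<inter> C = {}
    \<and> (\<forall>v\<in>A. deg_in E B v \<ge> deg_in E A v + max 1 (deg_in E C v))
    \<and> (\<forall>v\<in>B. deg_in E A v \<ge> deg_in E B v + max 1 (deg_in E C v))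
    \<and> (\<forall>v\<in>C. deg_in E C v = 0)
    \<and> (\<forall>v\<in>C. deg_in E A v = deg_in E B v)
    \<and> num_edges E (A \<union> B) C + 2 * num_edges E A A + 2 * num_edges E B B
        \<le> 2 * num_edges E A B"
proof -
  obtain x where "optimal_labelling V E x"
    using optimal_labelling_exists[OF assms(1)] .
  then interpret optimal_labelling V E x .
  define A B C where "A = V \<inter> x -` {1}" and "B = V \<inter> x -` {-1}" and "C = V \<inter> x -` {0}"
  have partition: "A \<union> B \<union> C = V" "A \<inter> B = {}" "A \<inter> C = {}" "B \<inter> C = {}"
    using labelling unfolding A_def B_def C_def by auto
  have deg_A: "deg_in E B v \<ge> deg_in E A v + max 1 (deg_in E C v)" if "v \<in> A" for v
    using deg_in_nonzero_level[of v] that unfolding A_def B_def C_def by simp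
  have deg_B: "deg_in E A v \<ge> deg_in E B v + max 1 (deg_in E C v)" if "v \<in> B" for v
    using deg_in_nonzero_level[of v] that unfolding A_def B_def C_def by simp
  have deg_C: "deg_in E C v = 0" "deg_in E A v = deg_in E B v" if "v \<in> C" for v
    using deg_in_zero_level[of v] that unfolding A_def B_def C_def by auto
  have "finite A" "finite B" "finite C"
    using finite_V unfolding A_def B_def C_def by auto
  then have "num_edges E (A \<union> B) C + 2 * num_edges E A A + 2 * num_edges E B B
      \<le> 2 * num_edges E A B"
    by (rule num_edges_inequality_from_degrees[OF symp_E irreflp_E _ _ _ partition(2-4)])
      (auto dest!: deg_A deg_B)
  then show ?thesis
    using partition by (intro exI[of _ A] exI[of _ B] exI[of _ C] conjI ballI deg_A deg_B deg_C)
qed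

end
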